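(* Let $k\ge1$, $d\ge1$ and $n_1,\dots,n_k\ge2$ be integers and $n:=n_1\cdots n_k$. There exists a $\Sigma_k(n_1,\dots,n_k)$-equivariant (continuous) map \[ C_k(d;n_1,\dots,n_k)\longrightarrow F(\mathbb{R}^d,n), \] where $\Sigma_k(n_1,\dots,n_k)$ acts on $F(\mathbb{R}^d,n)$ via the inclusion $\Sigma_k(n_1,\dots,n_k)\subseteq S_n$.
   Context: $F(\mathbb{R}^d,m)$ is the configuration space of $m$ pairwise distinct points in $\mathbb{R}^d$ with $S_m$ acting by $\tau\cdot(y_1,\dots,y_m)=(y_{\tau^{-1}(1)},\dots,y_{\tau^{-1}(m)})$. Wreath product action: if $G$ acts on $X$ and $S_m$ on $Y$, $G^{\times m}\rtimes S_m$ ($S_m$ permuting factors) acts on $X^{\times m}\times Y$ by $(g_1,\dots,g_m;\sigma)\cdot(x_1,\dots,x_m;y)=(g_1x_{\sigma^{-1}(1)},\dots,g_mx_{\sigma^{-1}(m)};\sigma y)$. $\Sigma_1(n_1)=S_{n_1}$, $\Sigma_k(n_1,\dots,n_k)=\Sigma_{k-1}(n_1,\dots,n_{k-1})^{\times n_k}\rtimes S_{n_k}$. $C_1(d;n_1)=F(\mathbb{R}^d,n_1)$, $C_k(d;n_1,\dots,n_k)=C_{k-1}(d;n_1,\dots,n_{k-1})^{\times n_k}\times F(\mathbb{R}^d,n_k)$ with the inductively defined wreath product action. Inclusion $\Sigma_k(n_1,\dots,n_k)\subseteq S_n$ (as the automorphisms of the rooted tree permuting its $n$ leaves): for $k=1$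 it is the identity; for $k\ge2$, with $n'=n_1\cdots n_{k-1}$, identify $[n]$ with $[n']\times[n_k]$ via $(i,j)\leftrightarrow(j-1)n'+i$, and let $(\Sigma_1,\dots,\Sigma_{n_k};\sigma)$ act by $(i,j)\mapsto(\Sigma_{\sigma(j)}(i),\sigma(j))$, where each $\Sigma_l\in\Sigma_{k-1}(n_1,\dots,n_{k-1})\subseteq S_{n'}$ inductively. *)

theory Defs
  imports "HOL-Analysis.Analysis" "HOL-Combinatorics.Permutations"
begin

text \<open>Conventions: indices are 0-based, so [m] = {1..m} is rendered as {..<m}.
  The sequence n_1,...,n_k is a function ns :: nat => nat (only ns 1, ..., ns k matter).
  R^d is an arbitrary Euclidean space type 'a (d = DIM('a) >= 1).\<close>

definition confF :: "nat \<Rightarrow> (nat \<Rightarrow> 'a) set" where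
  "confF m = {y \<in> PiE {..<m} (\<lambda>_. UNIV). inj_on y {..<m}}"

definition confF_top :: "nat \<Rightarrow> (nat \<Rightarrow> 'a::topological_space) topology" where
  "confF_top m = subtopology (product_topology (\<lambda>_. euclidean) {..<m}) (confF m)"

definition permact :: "nat \<Rightarrow> (nat \<Rightarrow> nat) \<Rightarrow> (nat \<Rightarrow> 'a) \<Rightarrow> (nat \<Rightarrow> 'a)" where
  "permact m \<tau> y = (\<lambda>i\<in>{..<m}. y (inv \<tau> i))"

text \<open>Coordinates of C_k: the configuration F(R^d, n_k) sits at indices [j], j < n_k;
  the j-th factor C_(k-1) sits at indices j # q, q a coordinate of C_(k-1).\<close>
fun idx :: "(nat \<Rightarrow> nat) \<Rightarrow> nat \<Rightarrow> nat list set" where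
  "idx ns 0 = {}"
| "idx ns (Suc k) = {[j] | j. j < ns (Suc k)} \<union> {j # q | j q. j < ns (Suc k) \<and> q \<in> idx ns k}"

text \<open>C_k(d; n_1,...,n_k) = C_(k-1)^(n_k) x F(R^d, n_k); C_0 is a point, so C_1 = F(R^d, n_1).\<close>
fun conf :: "(nat \<Rightarrow> nat) \<Rightarrow> nat \<Rightarrow> (nat list \<Rightarrow> 'a) set" where
  "conf ns 0 = {\<lambda>_. undefined}"
| "conf ns (Suc k) = {c \<in> PiE (idx ns (Suc k)) (\<lambda>_. UNIV).
      (\<lambda>j\<in>{..<ns (Suc k)}. c [j]) \<in> confF (ns (Suc k)) \<and>
      (\<forall>j < ns (Suc k). (\<lambda>q\<in>idx ns k. c (j # q)) \<in> conf ns k)}"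

definition conf_top :: "(nat \<Rightarrow> nat) \<Rightarrow> nat \<Rightarrow> (nat list \<Rightarrow> 'a::topological_space) topology" where
  "conf_top ns k = subtopology (product_topology (\<lambda>_. euclidean) (idx ns k)) (conf ns k)"

text \<open>Elements of Sigma_k = Sigma_(k-1)^(n_k) \<rtimes> S_(n_k): g [] is the permutation sigma in S_(n_k),
  and (\<lambda>q. g (j # q)) is the j-th factor in Sigma_(k-1). Sigma_0 is trivial.\<close>
fun sigma :: "(nat \<Rightarrow> nat) \<Rightarrow> nat \<Rightarrow> (nat list \<Rightarrow> nat \<Rightarrow> nat) set" where
  "sigma ns 0 = UNIV"
| "sigma ns (Suc k) = {g. g [] permutes {..<ns (Suc k)} \<and> (\<forall>j < ns (Suc k). (\<lambda>q. g (j # q)) \<in> sigma ns k)}"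

text \<open>Wreath product action:
  (g_1..g_m; sigma) . (x_1..x_m; y) = (g_1 x_(sigma^-1 1), ..., g_m x_(sigma^-1 m); sigma y).\<close>
fun act :: "(nat \<Rightarrow> nat) \<Rightarrow> nat \<Rightarrow> (nat list \<Rightarrow> nat \<Rightarrow> nat) \<Rightarrow> (nat list \<Rightarrow> 'a) \<Rightarrow> (nat list \<Rightarrow> 'a)" where
  "act ns 0 g c = (\<lambda>_. undefined)"
| "act ns (Suc k) g c = (\<lambda>p. case p of
       [] \<Rightarrow> undefined
     | j # q \<Rightarrow> if j < ns (Suc k) then
          (if q = [] then c [inv (g []) j]
           else act ns k (\<lambda>r. g (j # r)) (\<lambda>r. c (inv (g []) j # r)) q)
        else undefined)"

text \<open>Inclusion Sigma_k into S_n, n = n_1 ... n_k, via (i,j) <-> j*n' + i (0-based),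
  (g_1..g_(n_k); sigma) maps (i,j) to (g_(sigma j)(i), sigma j).\<close>
fun emb :: "(nat \<Rightarrow> nat) \<Rightarrow> nat \<Rightarrow> (nat list \<Rightarrow> nat \<Rightarrow> nat) \<Rightarrow> nat \<Rightarrow> nat" where
  "emb ns 0 g = id"
| "emb ns (Suc k) g = (\<lambda>x.
     if x < (\<Prod>i\<in>{1..Suc k}. ns i) then
       (let n' = (\<Prod>i\<in>{1..k}. ns i); \<sigma> = g []; j = x div n'; i = x mod n'
        in \<sigma> j * n' + emb ns k (\<lambda>q. g (\<sigma> j # q)) i)
     else x)"

end

theory Submission
  imports Defs
begin

(* The outer configuration y_1, ..., y_(n_k) gets pairwise disjoint balls of radius r, half the
   least distance between its points (capped at 1/2).  Into the j-th ball goes, recursively, the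
   flattened j-th inner configuration, squeezed into the open unit ball by x / (1 + |x|) and
   scaled by r.  Points in different balls differ since the balls are disjoint, points in the same
   ball differ by induction.  Both r and the squeezing are continuous, and r does not change when
   the outer points are relabelled, which makes the construction equivariant. *)

abbreviation leaves :: "(nat \<Rightarrow> nat) \<Rightarrow> nat \<Rightarrow> nat" where
  "leaves ns k \<equiv> \<Prod>i\<in>{1..k}. ns i"

lemma leaves_Suc: "leaves ns (Suc k) = leaves ns k * ns (Suc k)"
  by (simp add: prod.nat_ivl_Suc')

lemma less_mult_blockE:
  fixes x n m :: nat
  assumes "x < n * m"
  obtains j i where "j < m" "i < n" "x = j * n + i"
proof
  show "x div n < m" using assms by (simp add: less_mult_imp_div_less mult.commute)
  show "x mod n < n" using assms by (cases "n = 0") simp_all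
  show "x = x div n * n + x mod n" by simp
qed

lemma block_less: "j < m \<Longrightarrow> i < n \<Longrightarrow> j * n + i < n * (m::nat)"
proof -
  assume "j < m" "i < n"
  then have "j * n + i < Suc j * n" by simp
  also have "\<dots> \<le> m * n" using \<open>j < m\<close> by (intro mult_le_mono1) simp
  finally show ?thesis by (simp add: mult.commute)
qed

lemma block_div [simp]: "i < n \<Longrightarrow> (j * n + i) div n = (j::nat)"
  and block_mod [simp]: "i < n \<Longrightarrow> (j * n + i) mod n = (i::nat)"
  by simp_all

lemma block_eq_iff:
  fixes i i' n :: nat
  assumes "i < n" "i' < n"
  shows "j * n + i = j' * n + i' \<longleftrightarrow> j = j' \<and> i = i'"
  by (metis assms block_div block_mod)

lemma permutes_blockwise:
  fixes \<sigma> :: "nat \<Rightarrow> nat" and \<tau> :: "nat \<Rightarrow> nat \<Rightarrow> nat"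
  assumes \<sigma>: "\<sigma> permutes {..<m}" and \<tau>: "\<And>j. j < m \<Longrightarrow> \<tau> j permutes {..<n}"
  shows "(\<lambda>x. if x < n * m then \<sigma> (x div n) * n + \<tau> (\<sigma> (x div n)) (x mod n) else x)
           permutes {..<n * m}" (is "?f permutes _")
proof (rule bij_imp_permutes)
  have f_block: "?f (j * n + i) = \<sigma> j * n + \<tau> (\<sigma> j) i" if "j < m" "i < n" for j i
    using that block_less[OF that] by simp
  have \<sigma>_less: "\<sigma> j < m" if "j < m" for j
    using permutes_in_image[OF \<sigma>] that by simp
  have \<tau>_less: "\<tau> (\<sigma> j) i < n" if "j < m" "i < n" for j i
    using permutes_in_image[OF \<tau>[OF \<sigma>_less[OF that(1)]]] that(2) by simp
  have inj: "inj_on ?f {..<n * m}"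
  proof (rule inj_onI)
    fix x y assume "x \<in> {..<n * m}" "y \<in> {..<n * m}" and eq: "?f x = ?f y"
    then obtain j i j' i' where ji: "j < m" "i < n" "x = j * n + i"
      and ji': "j' < m" "i' < n" "y = j' * n + i'"
      by (auto elim!: less_mult_blockE)
    have "\<sigma> j * n + \<tau> (\<sigma> j) i = \<sigma> j' * n + \<tau> (\<sigma> j') i'"
      using eq unfolding ji(3) ji'(3) f_block[OF ji(1,2)] f_block[OF ji'(1,2)] .
    then have "\<sigma> j = \<sigma> j' \<and> \<tau> (\<sigma> j) i = \<tau> (\<sigma> j') i'"
      by (rule block_eq_iff[OF \<tau>_less[OF ji(1,2)] \<tau>_less[OF ji'(1,2)], THEN iffD1])
    then show "x = y"
      using ji ji' permutes_inj[OF \<sigma>] permutes_inj[OF \<tau>[OF \<sigma>_less[OF ji(1)]]]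
      by (auto simp: inj_eq)
  qed
  have "?f ` {..<n * m} \<subseteq> {..<n * m}"
    by (auto elim!: less_mult_blockE simp: f_block block_less \<sigma>_less \<tau>_less)
  then show "bij_betw ?f {..<n * m} {..<n * m}"
    unfolding bij_betw_def using inj endo_inj_surj[OF finite_lessThan _ inj] by blast
qed simp

lemma emb_Suc:
  "emb ns (Suc k) g = (\<lambda>x. if x < leaves ns k * ns (Suc k)
     then g [] (x div leaves ns k) * leaves ns k
            + emb ns k (\<lambda>q. g (g [] (x div leaves ns k) # q)) (x mod leaves ns k)
     else x)"
  unfolding emb.simps Let_def leaves_Suc ..

lemma emb_Suc_block:
  "j < ns (Suc k) \<Longrightarrow> i < leaves ns k \<Longrightarrow>
   emb ns (Suc k) g (j * leaves ns k + i) = g [] j * leaves ns k + emb ns k (\<lambda>q. g (g [] j # q)) i"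
  by (simp add: emb_Suc block_less Let_def)

lemma emb_permutes: "g \<in> sigma ns k \<Longrightarrow> emb ns k g permutes {..<leaves ns k}"
proof (induction k arbitrary: g)
  case 0
  then show ?case using permutes_id[of "{..<Suc 0}", unfolded id_def] by simp
next
  case (Suc k)
  have "emb ns (Suc k) g permutes {..<leaves ns k * ns (Suc k)}"
    unfolding emb_Suc using Suc
    by (intro permutes_blockwise[where \<sigma> = "g []" and \<tau> = "\<lambda>j. emb ns k (\<lambda>q. g (j # q))"])
      simp_all
  then show ?case by (simp only: leaves_Suc)
qed

lemma permact_eqI:
  assumes "\<tau> permutes {..<m}" "w \<in> extensional {..<m}" "\<And>y. y < m \<Longrightarrow> w (\<tau> y) = z y"
  shows "w = permact m \<tau> z"
  unfolding permact_def
proof (rule extensionalityI[OF assms(2) restrict_extensional])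
  fix i assume "i \<in> {..<m}"
  then have "inv \<tau> i < m" "\<tau> (inv \<tau> i) = i"
    using permutes_in_image[OF permutes_inv[OF assms(1)]] permutes_inverses(1)[OF assms(1)]
    by auto
  then show "w i = (\<lambda>i\<in>{..<m}. z (inv \<tau> i)) i"
    using assms(3)[of "inv \<tau> i"] \<open>i \<in> {..<m}\<close> by simp
qed

lemma continuous_map_dist:
  "continuous_map X euclidean f \<Longrightarrow> continuous_map X euclidean g \<Longrightarrow>
   continuous_map X euclideanreal (\<lambda>x. dist (f x) (g x))"
  by (simp add: continuous_map_atin tendsto_dist)

lemma continuous_map_scaleR:
  fixes g :: "'b \<Rightarrow> 'a::real_normed_vector"
  assumes "continuous_map X euclideanreal f" "continuous_map X euclidean g"
  shows "continuous_map X euclidean (\<lambda>x. f x *\<^sub>R g x)"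
  using assms
  by (simp add: continuous_map_atin tendsto_scaleR)

lemma continuous_map_Min_insert:
  assumes "finite A" "\<And>a. a \<in> A \<Longrightarrow> continuous_map X euclideanreal (f a)"
  shows "continuous_map X euclideanreal (\<lambda>x. Min (insert c ((\<lambda>a. f a x) ` A)))"
  using assms
proof (induction A rule: finite_induct)
  case (insert a A)
  have "Min (insert c ((\<lambda>a. f a x) ` insert a A)) = min (f a x) (Min (insert c ((\<lambda>a. f a x) ` A)))"
    for x
    using insert.hyps by (simp add: insert_commute[of c] Min_insert)
  then show ?case
    using insert by (simp add: continuous_map_real_min)
qed simp

definition shrink :: "'a::real_normed_vector \<Rightarrow> 'a" where
  "shrink x = x /\<^sub>R (1 + norm x)"

lemma shrink_denominator_pos: "0 < 1 + norm x"
  by (simp add: add_pos_nonneg)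

lemma norm_shrink: "norm (shrink x) = norm x / (1 + norm x)"
  using shrink_denominator_pos[of x] by (simp add: shrink_def divide_inverse_commute)

lemma norm_shrink_less: "norm (shrink x) < 1"
  by (simp add: norm_shrink shrink_denominator_pos)

lemma inj_shrink: "inj shrink"
proof (rule injI)
  fix x y :: 'a assume eq: "shrink x = shrink y"
  then have "norm x / (1 + norm x) = norm y / (1 + norm y)"
    by (metis norm_shrink)
  then have "norm x = norm y"
    using shrink_denominator_pos[of x] shrink_denominator_pos[of y] by (simp add: field_simps)
  then show "x = y"
    using eq shrink_denominator_pos[of y] by (simp add: shrink_def)
qed

lemma continuous_map_shrink: "continuous_map euclidean euclidean shrink"
  unfolding continuous_map_iff_continuous2 shrink_def
  by (intro continuous_intros) (simp add: shrink_denominator_pos[THEN order_less_imp_not_eq2])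

lemma shrunk_balls_disjoint:
  fixes p q :: "'a::real_normed_vector"
  assumes "0 < r" "2 * r \<le> dist p q"
  shows "p + r *\<^sub>R shrink u \<noteq> q + r *\<^sub>R shrink v"
proof
  assume "p + r *\<^sub>R shrink u = q + r *\<^sub>R shrink v"
  then have "p = q + r *\<^sub>R shrink v - r *\<^sub>R shrink u"
    by (simp add: eq_diff_eq)
  then have "dist p q = norm (r *\<^sub>R shrink v - r *\<^sub>R shrink u)"
    by (simp add: dist_norm)
  also have "\<dots> \<le> r * norm (shrink v) + r * norm (shrink u)"
    using norm_triangle_ineq4[of "r *\<^sub>R shrink v" "r *\<^sub>R shrink u"] assms(1) by simp
  also have "\<dots> < 2 * r"
    using mult_strict_left_mono[OF norm_shrink_less[of u] assms(1)]
      mult_strict_left_mono[OF norm_shrink_less[of v] assms(1)] by simp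
  finally show False using assms(2) by simp
qed

(* The 1 keeps the minimum defined, and the radius positive, when m < 2. *)
definition sep_radius :: "nat \<Rightarrow> (nat \<Rightarrow> 'a::metric_space) \<Rightarrow> real" where
  "sep_radius m y = Min (insert 1 ((\<lambda>(a, b). dist (y a) (y b)) ` ({..<m} \<times> {..<m} - Id))) / 2"

lemma sep_radius_pos: "inj_on y {..<m} \<Longrightarrow> 0 < sep_radius m y"
  by (auto simp: sep_radius_def Min_gr_iff inj_on_def)

lemma sep_radius_le_dist:
  assumes "a < m" "b < m" "a \<noteq> b"
  shows "2 * sep_radius m y \<le> dist (y a) (y b)"
proof -
  have "(a, b) \<in> {..<m} \<times> {..<m} - Id" using assms by simp
  then have "Min (insert 1 ((\<lambda>(a, b). dist (y a) (y b)) ` ({..<m} \<times> {..<m} - Id)))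
      \<le> dist (y a) (y b)"
    by (intro Min_le) force+
  then show ?thesis by (simp add: sep_radius_def)
qed

lemma sep_radius_cong: "(\<And>a. a < m \<Longrightarrow> y a = z a) \<Longrightarrow> sep_radius m y = sep_radius m z"
  unfolding sep_radius_def by (intro arg_cong[where f = "\<lambda>S. Min (insert 1 S) / 2"] image_cong) auto

lemma image_offdiag_permutes:
  assumes "\<sigma> permutes A"
  shows "map_prod \<sigma> \<sigma> ` (A \<times> A - Id) = A \<times> A - Id"
proof -
  have inj: "inj (map_prod \<sigma> \<sigma>)"
    using permutes_inj[OF assms] by (simp add: prod.inj_map)
  have "map_prod \<sigma> \<sigma> ` (A \<times> A) = A \<times> A"
    using permutes_image[OF assms] by (simp add: map_prod_surj_on)
  moreover have "map_prod \<sigma> \<sigma> ` Id = Id"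
    using permutes_surj[OF assms] by (auto simp: surj_def) (metis IdI map_prod_simp rev_image_eqI)
  ultimately show ?thesis
    by (simp add: image_set_diff[OF inj])
qed

lemma sep_radius_permute:
  assumes "\<sigma> permutes {..<m}"
  shows "sep_radius m (y \<circ> \<sigma>) = sep_radius m y"
proof -
  have "(\<lambda>(a, b). dist ((y \<circ> \<sigma>) a) ((y \<circ> \<sigma>) b)) ` ({..<m} \<times> {..<m} - Id)
      = (\<lambda>(a, b). dist (y a) (y b)) ` (map_prod \<sigma> \<sigma> ` ({..<m} \<times> {..<m} - Id))"
    unfolding image_image by (intro image_cong) auto
  then show ?thesis
    by (simp add: sep_radius_def image_offdiag_permutes[OF assms])
qed

lemma continuous_map_sep_radius:
  assumes "\<And>a. a < m \<Longrightarrow> continuous_map X euclidean (\<lambda>x. y x a)"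
  shows "continuous_map X euclideanreal (\<lambda>x. sep_radius m (y x))"
proof -
  have "continuous_map X euclideanreal
          (\<lambda>x. Min (insert 1
             ((\<lambda>p. dist (y x (fst p)) (y x (snd p))) ` ({..<m} \<times> {..<m} - Id))))"
    using assms by (intro continuous_map_Min_insert continuous_map_dist) auto
  then show ?thesis
    unfolding sep_radius_def case_prod_beta' by (intro continuous_map_real_divide) auto
qed

lemma Nil_notin_idx: "[] \<notin> idx ns k"
  by (cases k) auto

lemma topspace_conf_top: "topspace (conf_top ns k) = conf ns k"
  by (cases k) (auto simp: conf_top_def)

lemma continuous_map_conf_top_coordinate:
  "p \<in> idx ns k \<Longrightarrow> continuous_map (conf_top ns k) euclidean (\<lambda>c. c p)"
  unfolding conf_top_def
  by (rule continuous_map_from_subtopology[OF continuous_map_product_projection])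

lemma conf_Suc_inj_on: "c \<in> conf ns (Suc k) \<Longrightarrow> inj_on (\<lambda>j. c [j]) {..<ns (Suc k)}"
  by (simp add: confF_def inj_on_def)

fun flatten :: "(nat \<Rightarrow> nat) \<Rightarrow> nat \<Rightarrow> (nat list \<Rightarrow> 'a::real_normed_vector) \<Rightarrow> nat \<Rightarrow> 'a" where
  "flatten ns 0 c = (\<lambda>i\<in>{..<1}. 0)"
| "flatten ns (Suc k) c = (\<lambda>x\<in>{..<leaves ns (Suc k)}.
     c [x div leaves ns k] + sep_radius (ns (Suc k)) (\<lambda>j. c [j]) *\<^sub>R
       shrink (flatten ns k (\<lambda>q. c (x div leaves ns k # q)) (x mod leaves ns k)))"

declare flatten.simps(2) [simp del]

lemma flatten_extensional: "flatten ns k c \<in> extensional {..<leaves ns k}"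
  by (cases k) (simp_all add: flatten.simps(2))

lemma flatten_Suc_block:
  "j < ns (Suc k) \<Longrightarrow> i < leaves ns k \<Longrightarrow>
   flatten ns (Suc k) c (j * leaves ns k + i) =
     c [j] + sep_radius (ns (Suc k)) (\<lambda>j. c [j]) *\<^sub>R shrink (flatten ns k (\<lambda>q. c (j # q)) i)"
  using block_less[of j "ns (Suc k)" i "leaves ns k"] by (simp add: flatten.simps(2) leaves_Suc)

lemma flatten_cong: "(\<And>q. q \<in> idx ns k \<Longrightarrow> c q = c' q) \<Longrightarrow> flatten ns k c = flatten ns k c'"
proof (induction k arbitrary: c c')
  case (Suc k)
  show ?case
  proof (rule extensionalityI[OF flatten_extensional flatten_extensional])
    fix x assume "x \<in> {..<leaves ns (Suc k)}"
    then obtain j i where ji: "j < ns (Suc k)" "i < leaves ns k" "x = j * leaves ns k + i"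
      by (auto simp: leaves_Suc elim: less_mult_blockE)
    have "sep_radius (ns (Suc k)) (\<lambda>j. c [j]) = sep_radius (ns (Suc k)) (\<lambda>j. c' [j])"
      using Suc.prems by (intro sep_radius_cong) simp
    moreover have "flatten ns k (\<lambda>q. c (j # q)) = flatten ns k (\<lambda>q. c' (j # q))"
      using Suc.prems ji(1) by (intro Suc.IH) simp
    moreover have "c [j] = c' [j]"
      using Suc.prems ji(1) by simp
    ultimately show "flatten ns (Suc k) c x = flatten ns (Suc k) c' x"
      unfolding ji(3) flatten_Suc_block[OF ji(1,2)] by simp
  qed
qed simp

lemma flatten_in_confF: "c \<in> conf ns k \<Longrightarrow> flatten ns k c \<in> confF (leaves ns k)"
proof (induction k arbitrary: c)
  case 0
  then show ?case by (simp add: confF_def lessThan_Suc PiE_iff extensional_def)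
next
  case (Suc k)
  let ?m = "ns (Suc k)" and ?n = "leaves ns k"
  define r where "r = sep_radius ?m (\<lambda>j. c [j])"
  have r_pos: "0 < r"
    unfolding r_def using conf_Suc_inj_on[OF Suc.prems] by (rule sep_radius_pos)
  have inj_subtree: "inj_on (flatten ns k (\<lambda>q. c (j # q))) {..<?n}" if "j < ?m" for j
  proof -
    have "(\<lambda>q\<in>idx ns k. c (j # q)) \<in> conf ns k" using Suc.prems that by simp
    then have "flatten ns k (\<lambda>q\<in>idx ns k. c (j # q)) \<in> confF ?n" by (rule Suc.IH)
    moreover have "flatten ns k (\<lambda>q\<in>idx ns k. c (j # q)) = flatten ns k (\<lambda>q. c (j # q))"
      by (rule flatten_cong) simp
    ultimately show ?thesis by (simp add: confF_def)
  qed
  have "inj_on (flatten ns (Suc k) c) {..<?n * ?m}"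
  proof (rule inj_onI)
    fix x y assume "x \<in> {..<?n * ?m}" "y \<in> {..<?n * ?m}"
      and eq: "flatten ns (Suc k) c x = flatten ns (Suc k) c y"
    then obtain j i j' i' where ji: "j < ?m" "i < ?n" "x = j * ?n + i"
      and ji': "j' < ?m" "i' < ?n" "y = j' * ?n + i'"
      by (auto elim!: less_mult_blockE)
    have eq': "c [j] + r *\<^sub>R shrink (flatten ns k (\<lambda>q. c (j # q)) i)
             = c [j'] + r *\<^sub>R shrink (flatten ns k (\<lambda>q. c (j' # q)) i')"
      using eq unfolding ji(3) ji'(3) r_def
        flatten_Suc_block[OF ji(1,2)] flatten_Suc_block[OF ji'(1,2)] .
    have "j = j'"
    proof (rule ccontr)
      assume "j \<noteq> j'"
      with ji ji' have "2 * r \<le> dist (c [j]) (c [j'])"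
        unfolding r_def by (intro sep_radius_le_dist)
      from shrunk_balls_disjoint[OF r_pos this] eq' show False ..
    qed
    with eq' r_pos have "flatten ns k (\<lambda>q. c (j # q)) i = flatten ns k (\<lambda>q. c (j # q)) i'"
      by (simp add: inj_eq[OF inj_shrink])
    with inj_subtree[OF ji(1)] ji ji' \<open>j = j'\<close> show "x = y"
      by (simp add: inj_on_eq_iff)
  qed
  then show ?case
    using flatten_extensional[of ns "Suc k" c] by (simp add: confF_def PiE_def leaves_Suc)
qed

lemma sep_radius_act_Suc:
  assumes "g \<in> sigma ns (Suc k)"
  shows "sep_radius (ns (Suc k)) (\<lambda>a. act ns (Suc k) g c [a])
       = sep_radius (ns (Suc k)) (\<lambda>a. c [a])"
proof -
  have "sep_radius (ns (Suc k)) (\<lambda>a. act ns (Suc k) g c [a])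
      = sep_radius (ns (Suc k)) ((\<lambda>a. c [a]) \<circ> inv (g []))"
    by (intro sep_radius_cong) simp
  also have "\<dots> = sep_radius (ns (Suc k)) (\<lambda>a. c [a])"
    using assms by (intro sep_radius_permute permutes_inv) simp
  finally show ?thesis .
qed

lemma flatten_act_Suc_subtree:
  "j < ns (Suc k) \<Longrightarrow> flatten ns k (\<lambda>q. act ns (Suc k) g c (j # q))
     = flatten ns k (act ns k (\<lambda>q. g (j # q)) (\<lambda>q. c (inv (g []) j # q)))"
  using Nil_notin_idx[of ns k] by (intro flatten_cong) auto

lemma flatten_equivariant:
  "g \<in> sigma ns k \<Longrightarrow> y < leaves ns k \<Longrightarrow>
   flatten ns k (act ns k g c) (emb ns k g y) = flatten ns k c y"
proof (induction k arbitrary: g c y)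
  case 0
  then show ?case by simp
next
  case (Suc k)
  let ?m = "ns (Suc k)" and ?n = "leaves ns k"
  define \<sigma> where "\<sigma> = g []"
  have \<sigma>: "\<sigma> permutes {..<?m}" using Suc.prems(1) by (simp add: \<sigma>_def)
  obtain j i where ji: "j < ?m" "i < ?n" "y = j * ?n + i"
    using Suc.prems(2) by (auto simp: leaves_Suc elim: less_mult_blockE)
  define g' where "g' = (\<lambda>q. g (\<sigma> j # q))"
  have \<sigma>j: "\<sigma> j < ?m" and inv_\<sigma>j: "inv \<sigma> (\<sigma> j) = j"
    using permutes_in_image[OF \<sigma>] permutes_inverses(2)[OF \<sigma>] ji(1) by auto
  have g': "g' \<in> sigma ns k" using Suc.prems(1) \<sigma>j by (simp add: g'_def \<sigma>_def)
  have emb_i: "emb ns k g' i < ?n"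
    using permutes_in_image[OF emb_permutes[OF g']] ji(2) by simp
  have emb_y: "emb ns (Suc k) g y = \<sigma> j * ?n + emb ns k g' i"
    unfolding ji(3) \<sigma>_def g'_def by (rule emb_Suc_block[OF ji(1,2)])
  have leaf: "act ns (Suc k) g c [\<sigma> j] = c [j]"
    using \<sigma>j inv_\<sigma>j by (simp add: \<sigma>_def)
  have subtree: "flatten ns k (\<lambda>q. act ns (Suc k) g c (\<sigma> j # q)) (emb ns k g' i)
      = flatten ns k (\<lambda>q. c (j # q)) i"
  proof -
    have "flatten ns k (\<lambda>q. act ns (Suc k) g c (\<sigma> j # q))
        = flatten ns k (act ns k g' (\<lambda>q. c (j # q)))"
      using flatten_act_Suc_subtree[of "\<sigma> j" ns k g c, OF \<sigma>j]
      unfolding g'_def \<sigma>_def[symmetric] inv_\<sigma>j .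
    then show ?thesis using Suc.IH[OF g' ji(2)] by simp
  qed
  have "flatten ns (Suc k) (act ns (Suc k) g c) (emb ns (Suc k) g y)
      = act ns (Suc k) g c [\<sigma> j] + sep_radius ?m (\<lambda>a. act ns (Suc k) g c [a]) *\<^sub>R
          shrink (flatten ns k (\<lambda>q. act ns (Suc k) g c (\<sigma> j # q)) (emb ns k g' i))"
    unfolding emb_y by (rule flatten_Suc_block[OF \<sigma>j emb_i])
  also have "\<dots> = c [j] + sep_radius ?m (\<lambda>a. c [a]) *\<^sub>R shrink (flatten ns k (\<lambda>q. c (j # q)) i)"
    by (simp only: leaf sep_radius_act_Suc[OF Suc.prems(1)] subtree)
  also have "\<dots> = flatten ns (Suc k) c y"
    unfolding ji(3) by (rule flatten_Suc_block[OF ji(1,2), symmetric])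
  finally show ?case .
qed

lemma continuous_map_flatten_coordinate:
  assumes "\<And>p. p \<in> idx ns k \<Longrightarrow> continuous_map X euclidean (\<lambda>x. h x p)" "i < leaves ns k"
  shows "continuous_map X euclidean (\<lambda>x. flatten ns k (h x) i)"
  using assms
proof (induction k arbitrary: h i)
  case 0
  then show ?case by simp
next
  case (Suc k)
  obtain j i' where ji: "j < ns (Suc k)" "i' < leaves ns k" "i = j * leaves ns k + i'"
    using Suc.prems(2) by (auto simp: leaves_Suc elim: less_mult_blockE)
  have "continuous_map X euclidean (\<lambda>x. flatten ns k (\<lambda>q. h x (j # q)) i')"
    using Suc.prems(1) ji(1,2) by (intro Suc.IH) simp_all
  then have "continuous_map X euclidean (\<lambda>x. shrink (flatten ns k (\<lambda>q. h x (j # q)) i'))"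
    using continuous_map_compose[OF _ continuous_map_shrink] by (simp add: o_def)
  moreover have "continuous_map X euclideanreal (\<lambda>x. sep_radius (ns (Suc k)) (\<lambda>a. h x [a]))"
    using Suc.prems(1) by (intro continuous_map_sep_radius) simp
  ultimately show ?case
    unfolding ji(3) flatten_Suc_block[OF ji(1,2)] using Suc.prems(1) ji(1)
    by (intro continuous_map_add continuous_map_scaleR) simp_all
qed

lemma continuous_map_flatten:
  "continuous_map (conf_top ns k) (confF_top (leaves ns k)) (flatten ns k)"
  unfolding confF_top_def continuous_map_in_subtopology
proof
  have "continuous_map (conf_top ns k) euclidean (\<lambda>c. flatten ns k c i)" if "i < leaves ns k" for i
    using continuous_map_flatten_coordinate[of ns k "conf_top ns k" "\<lambda>c. c",
        OF continuous_map_conf_top_coordinate that] .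
  then show "continuous_map (conf_top ns k) (product_topology (\<lambda>_. euclidean) {..<leaves ns k})
      (flatten ns k)"
    using flatten_extensional by (auto simp: continuous_map_componentwise)
  show "flatten ns k \<in> topspace (conf_top ns k) \<rightarrow> confF (leaves ns k)"
    unfolding topspace_conf_top by (rule funcsetI) (rule flatten_in_confF)
qed

theorem lemma4p3:
  fixes ns :: "nat \<Rightarrow> nat" and k :: nat
  assumes "k \<ge> 1" and "\<forall>i\<in>{1..k}. ns i \<ge> 2"
  shows "\<exists>f :: (nat list \<Rightarrow> 'a::euclidean_space) \<Rightarrow> (nat \<Rightarrow> 'a).
           continuous_map (conf_top ns k) (confF_top (\<Prod>i\<in>{1..k}. ns i)) f \<and>
           (\<forall>g\<in>sigma ns k. \<forall>c\<in>conf ns k.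
              f (act ns k g c) = permact (\<Prod>i\<in>{1..k}. ns i) (emb ns k g) (f c))"
proof (intro exI conjI ballI)
  show "continuous_map (conf_top ns k) (confF_top (leaves ns k)) (flatten ns k)"
    by (rule continuous_map_flatten)
  fix g and c :: "nat list \<Rightarrow> 'a" assume g: "g \<in> sigma ns k"
  show "flatten ns k (act ns k g c) = permact (leaves ns k) (emb ns k g) (flatten ns k c)"
    by (rule permact_eqI[OF emb_permutes[OF g] flatten_extensional flatten_equivariant[OF g]])
qed

end
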